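(* Let $f:\{0,1\}^n\to\{0,1\}$ be a non-constant zebra function with $\operatorname{alt}(f)=k$ for some $k\ge1$. Then \[C(f)\le O\!\left(\operatorname{alt}(f)\max\{\mathsf N(f)^2,\mathsf N(\overline f)^2\}\right).\]
   Context: $\mathsf N(f)$ is the minimum degree of a real polynomial $p$ with $|p(x)|\le1/3$ whenever $f(x)=0$ and $|p(x)|\ge1$ whenever $f(x)=1$; $\overline f=1-f$. A monotone path is a sequence $x^{(1)},\dots,x^{(m)}\in\{0,1\}^n$ where each $x^{(i+1)}$ is obtained from $x^{(i)}$ by changing exactly one coordinate from $0$ to $1$. Its alternation number (w.r.t. $f$) is the number of $i$ with $f(x^{(i)})\ne f(x^{(i+1)})$. $\operatorname{alt}(f)$ is the maximum alternation number over monotone paths from $0^n$ to $1^n$. $f$ is a zebra function if all monotone paths from $0^n$ to $1^n$ have the same alternation number. $C(f)$ is the certificate complexity of $f$. Constants in $O(\cdot)$ are absolute. *)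

theory Defs
  imports Complex_Main
begin

text \<open>Points of the Boolean cube {0,1}^n are represented by the set of coordinates
  (among 0..n-1) equal to 1. A Boolean function is f :: nat set => bool
  (only its values on the cube matter).\<close>

definition cube :: "nat \<Rightarrow> nat set set" where
  "cube n = Pow {..<n}"

definition poly_deg_le :: "nat \<Rightarrow> nat \<Rightarrow> (nat set \<Rightarrow> real) \<Rightarrow> bool" where
  "poly_deg_le n d p \<longleftrightarrow> (\<exists>c :: nat set \<Rightarrow> real. \<forall>x\<in>cube n.
      p x = (\<Sum>S\<in>{S. S \<subseteq> {..<n} \<and> card S \<le> d}. c S * (\<Prod>i\<in>S. if i \<in> x then 1 else 0)))"

definition Ndeg :: "nat \<Rightarrow> (nat set \<Rightarrow> bool) \<Rightarrow> nat" where
  "Ndeg n f = (LEAST d. \<exists>p. poly_deg_le n d p \<and>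
      (\<forall>x\<in>cube n. (\<not> f x \<longrightarrow> \<bar>p x\<bar> \<le> 1/3) \<and> (f x \<longrightarrow> \<bar>p x\<bar> \<ge> 1)))"

definition cert_at :: "nat \<Rightarrow> (nat set \<Rightarrow> bool) \<Rightarrow> nat set \<Rightarrow> nat" where
  "cert_at n f x = (LEAST k. \<exists>S. S \<subseteq> {..<n} \<and> card S = k \<and>
      (\<forall>y\<in>cube n. (\<forall>i\<in>S. (i \<in> y \<longleftrightarrow> i \<in> x)) \<longrightarrow> f y = f x))"

definition cert :: "nat \<Rightarrow> (nat set \<Rightarrow> bool) \<Rightarrow> nat" where
  "cert n f = Max (cert_at n f ` cube n)"

definition mono_path :: "nat \<Rightarrow> nat set list \<Rightarrow> bool" where
  "mono_path n xs \<longleftrightarrow> xs \<noteq> [] \<and> hd xs = {} \<and> last xs = {..<n} \<and>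
     (\<forall>i. Suc i < length xs \<longrightarrow>
        (\<exists>a. a < n \<and> a \<notin> xs ! i \<and> xs ! Suc i = insert a (xs ! i)))"

definition alt_num :: "(nat set \<Rightarrow> bool) \<Rightarrow> nat set list \<Rightarrow> nat" where
  "alt_num f xs = card {i. Suc i < length xs \<and> f (xs ! i) \<noteq> f (xs ! Suc i)}"

definition alt :: "nat \<Rightarrow> (nat set \<Rightarrow> bool) \<Rightarrow> nat" where
  "alt n f = Max {alt_num f xs | xs. mono_path n xs}"

definition zebra :: "nat \<Rightarrow> (nat set \<Rightarrow> bool) \<Rightarrow> bool" where
  "zebra n f \<longleftrightarrow> (\<forall>xs ys. mono_path n xs \<and> mono_path n ys \<longrightarrow> alt_num f xs = alt_num f ys)"

end

(*
  For a zebra function f the number of alternations of f along a monotone path from {}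
  to x does not depend on the path; call it the level of x. The level is monotone, grows
  by at most one when a coordinate is added, and its parity determines f x. Given x, take
  a minimal S below x and a maximal W above x of the same level: f is constant between S
  and W, so S together with the complement of W is a certificate for x. Descending from S
  one level at a time, and ascending from W, cuts these two sets into at most alt f pieces,
  each of the form S' - T' for a jump: f is constant on [T', S') and changes at S' (or
  dually at T'). Symmetrizing an approximating polynomial of f or of its negation over the
  subcube [T', S'] gives a univariate polynomial of the same degree d that is at most 1/3
  on 0, ..., |S' - T'| - 1 and at least 1 at |S' - T'|. Lagrange interpolation at integer
  points near the extrema of a Chebyshev polynomial then forces |S' - T'| <= 200 (d + 1)^2.
*)

theory Submission
  imports Defs "HOL-Computational_Algebra.Polynomial"
begin

section \<open>Polynomials bounded on integer points\<close>

fun cheb_poly :: "nat \<Rightarrow> real poly" where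
  "cheb_poly 0 = 1"
| "cheb_poly (Suc 0) = [:0, 1:]"
| "cheb_poly (Suc (Suc n)) = smult 2 [:0, 1:] * cheb_poly (Suc n) - cheb_poly n"

lemma degree_cheb_poly: "degree (cheb_poly n) \<le> n"
proof (induction n rule: cheb_poly.induct)
  case (3 n)
  have "degree (smult 2 [:0, 1:] * cheb_poly (Suc n)) \<le> Suc (Suc n)"
    by (rule order.trans[OF degree_mult_le]) (use 3 in auto)
  then show ?case
    using 3 by (auto intro!: degree_diff_le)
qed auto

lemma poly_cheb_poly_cos: "poly (cheb_poly n) (cos t) = cos (real n * t)"
proof (induction n rule: cheb_poly.induct)
  case (3 n)
  have "cos (real (Suc (Suc n)) * t) + cos (real n * t) = 2 * cos t * cos (real (Suc n) * t)"
    using cos_add[of "real (Suc n) * t" t] cos_diff[of "real (Suc n) * t" t]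
    by (simp add: algebra_simps)
  then show ?case
    using 3 by (simp add: algebra_simps)
qed auto

lemma poly_cheb_poly_closed_form:
  assumes "a * b = 1" "a + b = 2 * y"
  shows "poly (cheb_poly n) y = (a ^ n + b ^ n) / 2"
proof (induction n rule: cheb_poly.induct)
  case (3 n)
  have "a ^ Suc (Suc n) + b ^ Suc (Suc n) = (a + b) * (a ^ Suc n + b ^ Suc n) - (a * b) * (a ^ n + b ^ n)"
    by (simp add: algebra_simps)
  then show ?case
    using 3 assms by simp
qed (use assms in auto)

lemma cheb_poly_le_exp:
  assumes "0 \<le> \<delta>"
  shows "poly (cheb_poly m) (1 + \<delta>) \<le> (exp (real m * (\<delta> + sqrt (2 * \<delta> + \<delta>\<^sup>2))) + 1) / 2"
proof -
  define s where "s = sqrt (2 * \<delta> + \<delta>\<^sup>2)"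
  define a where "a = 1 + \<delta> + s"
  define b where "b = 1 + \<delta> - s"
  have s: "0 \<le> s" "s\<^sup>2 = 2 * \<delta> + \<delta>\<^sup>2"
    using assms by (auto simp: s_def)
  have ab: "a * b = 1"
    using s by (simp add: a_def b_def algebra_simps power2_eq_square)
  have "1 \<le> a"
    using assms s by (simp add: a_def)
  moreover have "b = 1 / a"
    using ab \<open>1 \<le> a\<close> by (simp add: eq_divide_eq mult.commute)
  ultimately have "b ^ m \<le> 1"
    by (simp add: power_le_one)
  have "a ^ m \<le> exp (\<delta> + s) ^ m"
    using assms s by (intro power_mono) (auto simp: a_def add.assoc exp_ge_add_one_self)
  also have "\<dots> = exp (real m * (\<delta> + s))"
    by (simp add: exp_of_nat_mult)
  finally have "a ^ m \<le> exp (real m * (\<delta> + s))" .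
  have "poly (cheb_poly m) (1 + \<delta>) = (a ^ m + b ^ m) / 2"
    by (rule poly_cheb_poly_closed_form[OF ab]) (simp add: a_def b_def)
  then show ?thesis
    using \<open>a ^ m \<le> exp (real m * (\<delta> + s))\<close> \<open>b ^ m \<le> 1\<close> by (simp add: s_def)
qed

lemma cheb_poly_near_one:
  assumes "1 \<le> m" "200 * m\<^sup>2 \<le> L"
  shows "poly (cheb_poly m) (1 + 2 / real L) < 3 / 2"
proof -
  define \<delta> where "\<delta> = 2 / real L"
  define s where "s = sqrt (2 * \<delta> + \<delta>\<^sup>2)"
  have L: "200 * (real m)\<^sup>2 \<le> real L"
    using assms(2) by (metis of_nat_le_iff of_nat_mult of_nat_numeral of_nat_power)
  have "1 \<le> real m"
    using assms(1) by simp
  then have "real m \<le> (real m)\<^sup>2"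
    by (simp add: power2_eq_square)
  then have "200 * real m \<le> real L" "200 \<le> real L"
    using L \<open>1 \<le> real m\<close> by linarith+
  then have \<delta>: "0 < \<delta>" "\<delta> \<le> 1" "real m * \<delta> \<le> 1 / 100"
    by (auto simp: \<delta>_def field_simps)
  have "real m * s < 1 / 3"
  proof (rule power_less_imp_less_base)
    have "s\<^sup>2 \<le> 3 * \<delta>"
      using \<delta> by (simp add: s_def power2_eq_square mult_left_le_one_le)
    then have "(real m * s)\<^sup>2 \<le> (real m)\<^sup>2 * (3 * \<delta>)"
      by (simp add: power_mult_distrib mult_left_mono)
    also have "\<dots> \<le> 3 / 100"
      using L \<open>200 \<le> real L\<close> by (simp add: \<delta>_def field_simps)
    finally show "(real m * s)\<^sup>2 < (1 / 3)\<^sup>2"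
      by (simp add: power2_eq_square)
  qed (simp add: s_def)
  then have "exp (real m * (\<delta> + s)) \<le> exp (1 / 2)"
    using \<delta> by (simp add: distrib_left)
  also have "exp (1 / 2 :: real) < 2"
  proof (rule power_less_imp_less_base)
    have "exp (1 / 2 :: real) ^ 2 = exp 1"
      by (simp flip: exp_of_nat_mult)
    then show "exp (1 / 2 :: real) ^ 2 < 2 ^ 2"
      using exp_le by simp
  qed simp
  finally show ?thesis
    using cheb_poly_le_exp[of \<delta> m] \<delta> by (simp add: s_def \<delta>_def)
qed

definition lagrange_basis :: "(nat \<Rightarrow> 'a::field) \<Rightarrow> nat \<Rightarrow> nat \<Rightarrow> 'a poly" where
  "lagrange_basis x d j =
     smult (1 / (\<Prod>i\<in>{..d}-{j}. x j - x i)) (\<Prod>i\<in>{..d}-{j}. [:- x i, 1:])"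

lemma poly_lagrange_basis:
  "poly (lagrange_basis x d j) z = (\<Prod>i\<in>{..d}-{j}. (z - x i) / (x j - x i))"
  by (simp add: lagrange_basis_def poly_prod prod_dividef)

lemma degree_lagrange_basis: "j \<le> d \<Longrightarrow> degree (lagrange_basis x d j) \<le> d"
proof -
  assume "j \<le> d"
  have "degree (\<Prod>i\<in>{..d}-{j}. [:- x i, 1:]) \<le> (\<Sum>i\<in>{..d}-{j}. degree [:- x i, 1:])"
    by (rule degree_prod_sum_le[simplified comp_def]) simp
  also have "\<dots> = d"
    using \<open>j \<le> d\<close> by simp
  finally show ?thesis
    by (simp add: lagrange_basis_def)
qed

lemma poly_lagrange_basis_node:
  assumes "inj_on x {..d}" "j \<le> d" "k \<le> d"
  shows "poly (lagrange_basis x d j) (x k) = (if j = k then 1 else 0)"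
proof (cases "j = k")
  case True
  have "(x j - x i) / (x j - x i) = 1" if "i \<in> {..d}-{j}" for i
    using assms(1,2) that by (auto simp: inj_on_def)
  then show ?thesis
    using True by (simp add: poly_lagrange_basis)
next
  case False
  then have "(\<Prod>i\<in>{..d}-{j}. (x k - x i) / (x j - x i)) = 0"
    using assms(3) by (intro prod_zero) auto
  then show ?thesis
    using False by (simp add: poly_lagrange_basis)
qed

lemma lagrange_interpolation:
  fixes q :: "'a::field poly"
  assumes "degree q \<le> d" "inj_on x {..d}"
  shows "poly q z = (\<Sum>j\<le>d. poly q (x j) * (\<Prod>i\<in>{..d}-{j}. (z - x i) / (x j - x i)))"
proof -
  define Q where "Q = (\<Sum>j\<le>d. smult (poly q (x j)) (lagrange_basis x d j))"
  have "q = Q"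
  proof (rule poly_eqI_degree)
    show "poly q w = poly Q w" if "w \<in> x ` {..d}" for w
    proof -
      obtain k where k: "k \<le> d" "w = x k"
        using \<open>w \<in> x ` {..d}\<close> by auto
      have "(\<Sum>j\<le>d. poly q (x j) * poly (lagrange_basis x d j) (x k))
          = (\<Sum>j\<le>d. if j = k then poly q (x k) else 0)"
        using assms(2) k by (intro sum.cong) (auto simp: poly_lagrange_basis_node)
      then show ?thesis
        using k by (simp add: Q_def poly_sum)
    qed
    have "degree Q \<le> d"
      unfolding Q_def by (auto intro!: degree_sum_le order.trans[OF degree_smult_le] degree_lagrange_basis)
    then show "degree q < card (x ` {..d})" "degree Q < card (x ` {..d})"
      using assms by (simp_all add: card_image)
  qed
  then have "poly q z = poly Q z"
    by simp
  also have "\<dots> = (\<Sum>j\<le>d. poly q (x j) * (\<Prod>i\<in>{..d}-{j}. (z - x i) / (x j - x i)))"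
    by (simp add: Q_def poly_sum poly_lagrange_basis)
  finally show ?thesis .
qed

lemma lagrange_weight_sign:
  fixes x :: "nat \<Rightarrow> real"
  assumes dec: "\<And>i j. i < j \<Longrightarrow> j \<le> m \<Longrightarrow> x j < x i"
    and above: "\<And>i. i \<le> m \<Longrightarrow> x i < z" and "j \<le> m"
  shows "0 \<le> (-1) ^ j * (\<Prod>i\<in>{..m}-{j}. (z - x i) / (x j - x i))"
proof -
  have split: "{..m}-{j} = {..<j} \<union> {j<..m}"
    using \<open>j \<le> m\<close> by auto
  have "(\<Prod>i\<in>{..m}-{j}. (z - x i) / (x j - x i))
      = (\<Prod>i<j. (z - x i) / (x j - x i)) * (\<Prod>i\<in>{j<..m}. (z - x i) / (x j - x i))"
    unfolding split by (rule prod.union_disjoint) auto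
  moreover have "(\<Prod>i<j. (z - x i) / (x i - x j)) = (-1) ^ j * (\<Prod>i<j. (z - x i) / (x j - x i))"
    using prod_uminus[of "\<lambda>i. (z - x i) / (x j - x i)" "{..<j}"] by (simp add: minus_divide_right)
  ultimately have "(-1) ^ j * (\<Prod>i\<in>{..m}-{j}. (z - x i) / (x j - x i))
      = (\<Prod>i<j. (z - x i) / (x i - x j)) * (\<Prod>i\<in>{j<..m}. (z - x i) / (x j - x i))"
    by simp
  also have "\<dots> \<ge> 0"
    using dec above \<open>j \<le> m\<close> by (intro mult_nonneg_nonneg prod_nonneg) (auto simp: less_imp_le)
  finally show ?thesis .
qed

lemma interpolation_bound_by_alternating_poly:
  fixes h P :: "real poly" and x :: "nat \<Rightarrow> real"
  assumes "degree h \<le> m" "degree P \<le> m"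
    and dec: "\<And>i j. i < j \<Longrightarrow> j \<le> m \<Longrightarrow> x j < x i"
    and above: "\<And>i. i \<le> m \<Longrightarrow> x i < z"
    and alternating: "\<And>j. j \<le> m \<Longrightarrow> 1 \<le> (-1) ^ j * poly P (x j)"
    and small: "\<And>j. j \<le> m \<Longrightarrow> \<bar>poly h (x j)\<bar> \<le> \<epsilon>"
  shows "\<bar>poly h z\<bar> \<le> \<epsilon> * poly P z"
proof -
  define w where "w j = (\<Prod>i\<in>{..m}-{j}. (z - x i) / (x j - x i))" for j
  have inj: "inj_on x {..m}"
    by (rule inj_onI) (metis atMost_iff dec linorder_neqE_nat order.irrefl)
  have "0 \<le> \<epsilon>"
    using small[of 0] by linarith
  have abs_w: "\<bar>w j\<bar> \<le> w j * poly P (x j)" if "j \<le> m" for j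
  proof -
    have sign: "0 \<le> (-1) ^ j * w j"
      unfolding w_def by (rule lagrange_weight_sign[OF dec above that])
    then have "\<bar>w j\<bar> = (-1) ^ j * w j"
      using abs_of_nonneg[OF sign] by (simp add: abs_mult)
    also have "\<dots> \<le> ((-1) ^ j * w j) * ((-1) ^ j * poly P (x j))"
      using sign alternating[OF that] by (simp add: mult_le_cancel_left1)
    also have "\<dots> = w j * poly P (x j)"
      by (simp add: algebra_simps flip: power_mult_distrib)
    finally show ?thesis .
  qed
  have "\<bar>poly h z\<bar> = \<bar>\<Sum>j\<le>m. poly h (x j) * w j\<bar>"
    unfolding w_def by (subst lagrange_interpolation[OF assms(1) inj, of z]) (rule refl)
  also have "\<dots> \<le> (\<Sum>j\<le>m. \<bar>poly h (x j)\<bar> * \<bar>w j\<bar>)"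
    by (rule order.trans[OF sum_abs]) (simp add: abs_mult)
  also have "\<dots> \<le> (\<Sum>j\<le>m. \<epsilon> * (w j * poly P (x j)))"
    using small abs_w \<open>0 \<le> \<epsilon>\<close> by (intro sum_mono mult_mono) auto
  also have "\<dots> = \<epsilon> * poly P z"
    unfolding w_def lagrange_interpolation[OF assms(2) inj, of z]
    by (simp add: sum_distrib_left mult_ac)
  finally show ?thesis .
qed

lemma half_le_sin:
  fixes x :: real
  assumes "0 \<le> x" "x \<le> 1"
  shows "x / 2 \<le> sin x"
proof -
  have "\<bar>sin x - x\<bar> \<le> x ^ 3 / 6"
    using Maclaurin_sin_bound[of x 3] assms
    by (simp add: numeral_3_eq_3 sin_coeff_def fact_numeral)
  moreover have "x ^ 3 \<le> x"
    unfolding power3_eq_cube using assms by (intro mult_left_le_one_le mult_le_one) auto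
  ultimately show ?thesis
    by linarith
qed

lemma cos_diff_lower_bound:
  assumes "0 \<le> a" "0 < h" "h \<le> 2" "a + h \<le> pi"
  shows "h\<^sup>2 / 8 \<le> cos a - cos (a + h)"
proof -
  have "sin (h / 2) \<le> sin (a + h / 2)"
  proof (cases "a + h / 2 \<le> pi / 2")
    case True
    then show ?thesis
      using assms by (intro sin_monotone_2pi_le) auto
  next
    case False
    then have "sin (h / 2) \<le> sin (pi - (a + h / 2))"
      using assms by (intro sin_monotone_2pi_le) auto
    then show ?thesis
      by simp
  qed
  moreover have "h / 4 \<le> sin (h / 2)"
    using half_le_sin[of "h / 2"] assms by simp
  ultimately have "(h / 4) * (h / 4) \<le> sin (a + h / 2) * sin (h / 2)"
    using assms by (intro mult_mono) auto
  moreover have "cos a - cos (a + h) = 2 * sin (a + h / 2) * sin (h / 2)"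
    by (simp add: cos_diff_cos field_simps)
  ultimately show ?thesis
    by (simp add: power2_eq_square)
qed

lemma cos_near_multiple_of_pi:
  assumes "\<bar>t - real j * pi\<bar> \<le> pi / 3"
  shows "1 / 2 \<le> (-1) ^ j * cos t"
proof -
  have "cos (pi / 3) \<le> cos \<bar>t - real j * pi\<bar>"
    using assms by (intro cos_monotone_0_pi_le) auto
  then have "1 / 2 \<le> cos (t - real j * pi)"
    by (simp add: cos_60)
  also have "cos (t - real j * pi) = (-1) ^ j * cos t"
    by (simp add: cos_diff sin_npi cos_npi mult.commute)
  finally show ?thesis .
qed

lemma cos_arc_hits_integer:
  assumes "0 \<le> a" "0 < h" "h \<le> 2" "a + h \<le> pi" "16 \<le> real L * h\<^sup>2"
  obtains t :: real and k :: nat where "a \<le> t" "t \<le> a + h" "real L * (1 + cos t) / 2 = real k"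
proof -
  define g where "g t = real L * (1 + cos t) / 2" for t
  have "real L * (h\<^sup>2 / 8) \<le> real L * (cos a - cos (a + h))"
    using cos_diff_lower_bound[OF assms(1-4)] by (intro mult_left_mono) auto
  then have "g (a + h) + 1 \<le> g a"
    using assms(5) by (simp add: g_def field_simps)
  then have "of_int \<lceil>g (a + h)\<rceil> \<le> g a"
    using of_int_ceiling_le_add_one[of "g (a + h)"] by linarith
  moreover have "continuous_on {a..a + h} g"
    unfolding g_def by (intro continuous_intros) auto
  ultimately obtain t where t: "a \<le> t" "t \<le> a + h" "g t = of_int \<lceil>g (a + h)\<rceil>"
    using IVT2'[OF le_of_int_ceiling] assms(2) by (metis less_add_same_cancel1 less_imp_le)
  moreover have "0 \<le> 1 + cos (a + h)"
    using cos_ge_minus_one[of "a + h"] by linarith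
  then have "0 \<le> g (a + h)"
    by (simp add: g_def)
  ultimately show ?thesis
    using that[of t "nat \<lceil>g (a + h)\<rceil>"] by (simp add: g_def)
qed

(* Disjoint arcs in [0, pi], the j-th one close to the extremum j pi / m of cos (m t). *)
definition cheb_arc_len :: "nat \<Rightarrow> real" where
  "cheb_arc_len m = pi / (3 * real m)"

definition cheb_arc_start :: "nat \<Rightarrow> nat \<Rightarrow> real" where
  "cheb_arc_start m j = real j * (pi - cheb_arc_len m) / real m"

lemma cheb_arc_len_bounds:
  assumes "1 \<le> m"
  shows "0 < cheb_arc_len m" "real m * cheb_arc_len m = pi / 3" "cheb_arc_len m \<le> pi / 3"
  using assms by (auto simp: cheb_arc_len_def field_simps)

lemma cheb_arc_len_sq:
  assumes "1 \<le> m" "200 * m\<^sup>2 \<le> L"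
  shows "16 \<le> real L * (cheb_arc_len m)\<^sup>2"
proof -
  have "200 * (real m)\<^sup>2 \<le> real L"
    using assms(2) by (metis of_nat_le_iff of_nat_mult of_nat_numeral of_nat_power)
  then have "200 * (real m)\<^sup>2 * (cheb_arc_len m)\<^sup>2 \<le> real L * (cheb_arc_len m)\<^sup>2"
    by (intro mult_right_mono) auto
  moreover have "(2 / 3)\<^sup>2 \<le> (real m * cheb_arc_len m)\<^sup>2"
    using cheb_arc_len_bounds(2)[OF assms(1)] pi_ge_two by (intro power_mono) auto
  ultimately show ?thesis
    by (simp add: power2_eq_square ac_simps)
qed

lemma cheb_arc_within_0_pi:
  assumes "1 \<le> m" "j \<le> m"
  shows "0 \<le> cheb_arc_start m j" "cheb_arc_start m j + cheb_arc_len m \<le> pi"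
proof -
  have "real j * (pi - cheb_arc_len m) \<le> real m * (pi - cheb_arc_len m)"
    using assms cheb_arc_len_bounds[OF assms(1)] by (intro mult_right_mono) auto
  then show "cheb_arc_start m j + cheb_arc_len m \<le> pi"
    using assms(1) by (simp add: cheb_arc_start_def field_simps)
  show "0 \<le> cheb_arc_start m j"
    using cheb_arc_len_bounds[OF assms(1)] by (simp add: cheb_arc_start_def)
qed

lemma cheb_arcs_disjoint:
  assumes "1 \<le> m" "i < j"
  shows "cheb_arc_start m i + cheb_arc_len m < cheb_arc_start m j"
proof -
  note h = cheb_arc_len_bounds[OF assms(1)]
  have "real m * (cheb_arc_start m i + cheb_arc_len m) = real i * (pi - cheb_arc_len m) + pi / 3"
    using assms(1) h(2) by (simp add: cheb_arc_start_def distrib_left)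
  also have "\<dots> < (real i + 1) * (pi - cheb_arc_len m)"
    using h(3) pi_gt_zero by (simp add: algebra_simps, linarith)
  also have "\<dots> \<le> real j * (pi - cheb_arc_len m)"
    using assms(2) h(1,3) by (intro mult_right_mono) auto
  also have "\<dots> = real m * cheb_arc_start m j"
    using assms(1) by (simp add: cheb_arc_start_def)
  finally show ?thesis
    using assms(1) by (simp add: mult_less_cancel_left_pos)
qed

lemma cheb_arc_near_extremum:
  assumes "1 \<le> m" "j \<le> m" "cheb_arc_start m j \<le> \<theta>" "\<theta> \<le> cheb_arc_start m j + cheb_arc_len m"
  shows "\<bar>real m * \<theta> - real j * pi\<bar> \<le> pi / 3"
proof -
  note h = cheb_arc_len_bounds[OF assms(1)]
  have "real m * cheb_arc_start m j \<le> real m * \<theta>"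
    "real m * \<theta> \<le> real m * cheb_arc_start m j + real m * cheb_arc_len m"
    using assms(3,4) by (auto simp flip: distrib_left intro: mult_left_mono)
  moreover have "real m * cheb_arc_start m j = real j * (pi - cheb_arc_len m)"
    using assms(1) by (simp add: cheb_arc_start_def)
  then have "real m * cheb_arc_start m j = real j * pi - real j * cheb_arc_len m"
    by (simp add: right_diff_distrib)
  moreover have "0 \<le> real j * cheb_arc_len m" "real j * cheb_arc_len m \<le> real m * cheb_arc_len m"
    using assms(2) h(1) by (auto intro: mult_right_mono)
  ultimately show ?thesis
    unfolding abs_le_iff using h(2) by linarith
qed

lemma chebyshev_integer_nodes:
  assumes "1 \<le> m" "200 * m\<^sup>2 \<le> L"
  obtains x :: "nat \<Rightarrow> nat" and \<theta> :: "nat \<Rightarrow> real" where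
    "\<And>j. j \<le> m \<Longrightarrow> x j \<le> L"
    "\<And>i j. i < j \<Longrightarrow> j \<le> m \<Longrightarrow> x j < x i"
    "\<And>j. j \<le> m \<Longrightarrow> real (x j) = real L * (1 + cos (\<theta> j)) / 2"
    "\<And>j. j \<le> m \<Longrightarrow> \<bar>real m * \<theta> j - real j * pi\<bar> \<le> pi / 3"
proof -
  define h where "h = cheb_arc_len m"
  define a where "a = cheb_arc_start m"
  note h = cheb_arc_len_bounds[OF assms(1), folded h_def]
  have "16 \<le> real L * h\<^sup>2"
    unfolding h_def using assms by (rule cheb_arc_len_sq)
  have "h \<le> 2"
    using h(3) pi_less_4 by linarith
  have "\<exists>t k. a j \<le> t \<and> t \<le> a j + h \<and> real L * (1 + cos t) / 2 = real k" if "j \<le> m" for j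
    using cos_arc_hits_integer[of "a j" h L] cheb_arc_within_0_pi[OF assms(1) that, folded a_def h_def]
      h(1) \<open>h \<le> 2\<close> \<open>16 \<le> real L * h\<^sup>2\<close> by blast
  then obtain \<theta> x where node: "\<And>j. j \<le> m \<Longrightarrow>
      a j \<le> \<theta> j \<and> \<theta> j \<le> a j + h \<and> real L * (1 + cos (\<theta> j)) / 2 = real (x j)"
    by metis
  show ?thesis
  proof
    show "x j \<le> L" if "j \<le> m" for j
      using node[OF that] cos_le_one[of "\<theta> j"] mult_left_mono[of "1 + cos (\<theta> j)" 2 "real L"]
      by (simp flip: of_nat_le_iff)
    show "real (x j) = real L * (1 + cos (\<theta> j)) / 2" if "j \<le> m" for j
      using node[OF that] by simp
    show "\<bar>real m * \<theta> j - real j * pi\<bar> \<le> pi / 3" if "j \<le> m" for j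
      using cheb_arc_near_extremum[OF assms(1) that] node[OF that] by (simp add: a_def h_def)
    show "x j < x i" if "i < j" "j \<le> m" for i j
    proof -
      have "\<theta> i < \<theta> j" "0 \<le> \<theta> i" "\<theta> j \<le> pi"
        using node[of i] node[of j] cheb_arcs_disjoint[OF assms(1) \<open>i < j\<close>]
          cheb_arc_within_0_pi[OF assms(1), of i] cheb_arc_within_0_pi[OF assms(1), of j] that
        by (auto simp: a_def h_def)
      then have "cos (\<theta> j) < cos (\<theta> i)"
        by (intro cos_monotone_0_pi) auto
      moreover have "0 < real L"
        using \<open>16 \<le> real L * h\<^sup>2\<close> by (cases "L = 0") auto
      ultimately have "real L * (1 + cos (\<theta> j)) < real L * (1 + cos (\<theta> i))"
        by (intro mult_strict_left_mono) auto
      then show ?thesis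
        using node[of i] node[of j] that by simp
    qed
  qed
qed

(* Interpolate h at integer points near the extrema of the Chebyshev polynomial T_m
   rescaled to [0, L]; the interpolation weights at L + 1 alternate in sign exactly
   like the values of T_m at the nodes. *)
lemma poly_bounded_on_integers_at_next:
  fixes h :: "real poly"
  assumes "degree h \<le> m" "1 \<le> m" "200 * m\<^sup>2 \<le> L"
    and small: "\<And>t. t \<le> L \<Longrightarrow> \<bar>poly h (real t)\<bar> \<le> 1 / 3"
  shows "\<bar>poly h (real L + 1)\<bar> < 1"
proof -
  obtain x :: "nat \<Rightarrow> nat" and \<theta> where
    x_le: "\<And>j. j \<le> m \<Longrightarrow> x j \<le> L" and
    x_dec: "\<And>i j. i < j \<Longrightarrow> j \<le> m \<Longrightarrow> x j < x i" and
    x_cos: "\<And>j. j \<le> m \<Longrightarrow> real (x j) = real L * (1 + cos (\<theta> j)) / 2" and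
    \<theta>: "\<And>j. j \<le> m \<Longrightarrow> \<bar>real m * \<theta> j - real j * pi\<bar> \<le> pi / 3"
    using chebyshev_integer_nodes[OF assms(2,3)] by blast
  have "1 \<le> m\<^sup>2"
    using assms(2) by (simp add: one_le_power)
  then have "0 < L"
    using assms(3) by linarith
  define P where "P = smult 2 (cheb_poly m \<circ>\<^sub>p [:-1, 2 / real L:])"
  have poly_P: "poly P w = 2 * poly (cheb_poly m) (2 * w / real L - 1)" for w
    by (simp add: P_def poly_pcompose algebra_simps)
  have "degree P \<le> m"
    using degree_cheb_poly[of m] by (simp add: P_def degree_pcompose)
  have "1 \<le> (-1) ^ j * poly P (real (x j))" if "j \<le> m" for j
  proof -
    have "poly P (real (x j)) = 2 * cos (real m * \<theta> j)"
      using \<open>0 < L\<close> by (simp add: poly_P x_cos[OF that] poly_cheb_poly_cos)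
    then show ?thesis
      using cos_near_multiple_of_pi[OF \<theta>[OF that]] by simp
  qed
  moreover have "real (x j) < real L + 1" if "j \<le> m" for j
    using x_le[OF that] by simp
  ultimately have "\<bar>poly h (real L + 1)\<bar> \<le> 1 / 3 * poly P (real L + 1)"
    using assms(1) \<open>degree P \<le> m\<close> x_dec x_le small
    by (intro interpolation_bound_by_alternating_poly[where x = "\<lambda>j. real (x j)"]) auto
  also have "poly P (real L + 1) = 2 * poly (cheb_poly m) (1 + 2 / real L)"
    using \<open>0 < L\<close> by (simp add: poly_P field_simps)
  finally show ?thesis
    using cheb_poly_near_one[OF assms(2,3)] by linarith
qed

lemma poly_jump_length_bound:
  fixes h :: "real poly"
  assumes "degree h \<le> d"
    and small: "\<And>t. t < D \<Longrightarrow> \<bar>poly h (real t)\<bar> \<le> 1 / 3" and big: "1 \<le> \<bar>poly h (real D)\<bar>"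
  shows "D \<le> 200 * (Suc d)\<^sup>2"
proof (rule ccontr)
  assume "\<not> ?thesis"
  then have "200 * (Suc d)\<^sup>2 \<le> D - 1" and "real (D - 1) + 1 = real D"
    by auto
  then have "\<bar>poly h (real D)\<bar> < 1"
    using small assms(1) poly_bounded_on_integers_at_next[of h "Suc d" "D - 1"] by fastforce
  then show False
    using big by simp
qed

section \<open>Symmetrization\<close>

definition falling_poly :: "nat \<Rightarrow> real poly" where
  "falling_poly k = (\<Prod>i<k. [:- real i, 1:])"

lemma poly_falling_poly: "poly (falling_poly k) x = (\<Prod>i<k. x - real i)"
  by (simp add: falling_poly_def poly_prod)

lemma poly_falling_poly_of_nat: "poly (falling_poly k) (real x) = real (x choose k) * fact k"
  by (simp add: poly_falling_poly binomial_gbinomial gbinomial_mult_fact' lessThan_atLeast0)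

lemma degree_falling_poly: "degree (falling_poly k) \<le> k"
proof -
  have "degree (falling_poly k) \<le> (\<Sum>i<k. degree [:- real i, 1:])"
    unfolding falling_poly_def by (rule degree_prod_sum_le[simplified comp_def]) simp
  then show ?thesis
    by simp
qed

lemma card_layer_supersets:
  assumes "finite F" "T \<subseteq> F" "card T \<le> t"
  shows "card {y. y \<subseteq> F \<and> card y = t \<and> T \<subseteq> y} = (card F - card T) choose (t - card T)"
proof -
  have "finite T"
    using assms(1,2) finite_subset by blast
  have "bij_betw (\<lambda>y. y - T) {y. y \<subseteq> F \<and> card y = t \<and> T \<subseteq> y} {y. y \<subseteq> F - T \<and> card y = t - card T}"
  proof (rule bij_betw_byWitness[where f' = "\<lambda>y. y \<union> T"])
    show "(\<lambda>y. y \<union> T) ` {y. y \<subseteq> F - T \<and> card y = t - card T} \<subseteq> {y. y \<subseteq> F \<and> card y = t \<and> T \<subseteq> y}"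
    proof (rule image_subsetI)
      fix y
      assume "y \<in> {y. y \<subseteq> F - T \<and> card y = t - card T}"
      then have y: "y \<subseteq> F - T" "card y = t - card T"
        by auto
      moreover have "finite y"
        using y(1) assms(1) by (meson finite_Diff finite_subset)
      ultimately have "card (y \<union> T) = t"
        using \<open>finite T\<close> assms(3) by (subst card_Un_disjoint) auto
      then show "y \<union> T \<in> {y. y \<subseteq> F \<and> card y = t \<and> T \<subseteq> y}"
        using y assms(2) by auto
    qed
  qed (use \<open>finite T\<close> in \<open>auto simp: card_Diff_subset\<close>)
  then have "card {y. y \<subseteq> F \<and> card y = t \<and> T \<subseteq> y} = card {y. y \<subseteq> F - T \<and> card y = t - card T}"
    by (rule bij_betw_same_card)
  also have "\<dots> = (card F - card T) choose (t - card T)"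
    using assms by (simp add: n_subsets card_Diff_subset \<open>finite T\<close>)
  finally show ?thesis .
qed

lemma card_layer_supersets_falling:
  assumes "finite F" "T \<subseteq> F" "t \<le> card F"
  shows "real (card {y. y \<subseteq> F \<and> card y = t \<and> T \<subseteq> y}) = real (card F choose t)
    * poly (falling_poly (card T)) (real t) / poly (falling_poly (card T)) (real (card F))"
proof (cases "card T \<le> t")
  case True
  have "card T \<le> card F"
    using assms by (simp add: card_mono)
  then have "poly (falling_poly (card T)) (real (card F)) \<noteq> 0"
    by (simp add: poly_falling_poly_of_nat)
  moreover have "(card F choose t) * (t choose card T) = (card F choose card T) * ((card F - card T) choose (t - card T))"
    using True assms(3) by (rule choose_mult)
  then have "real (card F choose t) * real (t choose card T) = real (card F choose card T) * real ((card F - card T) choose (t - card T))"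
    by (metis of_nat_mult)
  ultimately show ?thesis
    using True assms by (simp add: card_layer_supersets poly_falling_poly_of_nat field_simps)
next
  case False
  have "card T \<le> card y" if "y \<subseteq> F" "T \<subseteq> y" for y
    using that assms(1) by (meson card_mono finite_subset)
  then have empty: "{y. y \<subseteq> F \<and> card y = t \<and> T \<subseteq> y} = {}"
    using False by force
  show ?thesis
    unfolding empty using False by (simp add: poly_falling_poly_of_nat)
qed

lemma prod_indicator_eq:
  "finite S \<Longrightarrow> (\<Prod>i\<in>S. if i \<in> z then 1 else 0 :: real) = (if S \<subseteq> z then 1 else 0)"
  by (induction S rule: finite_induct) auto

lemma layer_sum_monomial:
  assumes "finite F" "A \<inter> F = {}" "finite S" "t \<le> card F"
  shows "(\<Sum>y | y \<subseteq> F \<and> card y = t. \<Prod>i\<in>S. if i \<in> A \<union> y then 1 else 0 :: real)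
    = (if S \<subseteq> A \<union> F then real (card F choose t) * poly (falling_poly (card (S \<inter> F))) (real t)
         / poly (falling_poly (card (S \<inter> F))) (real (card F)) else 0)"
proof -
  have monomial: "(\<Prod>i\<in>S. if i \<in> A \<union> y then 1 else 0 :: real) = of_bool (S \<subseteq> A \<union> F \<and> S \<inter> F \<subseteq> y)"
    if "y \<subseteq> F" for y
  proof -
    have "S \<subseteq> A \<union> y \<longleftrightarrow> S \<subseteq> A \<union> F \<and> S \<inter> F \<subseteq> y"
      using that assms(2) by auto
    then show ?thesis
      by (simp only: prod_indicator_eq[OF assms(3)]) simp
  qed
  have "(\<Sum>y | y \<subseteq> F \<and> card y = t. \<Prod>i\<in>S. if i \<in> A \<union> y then 1 else 0 :: real)
      = (\<Sum>y | y \<subseteq> F \<and> card y = t. of_bool (S \<subseteq> A \<union> F \<and> S \<inter> F \<subseteq> y))"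
    using monomial by (intro sum.cong) auto
  also have "\<dots> = real (card {y. y \<subseteq> F \<and> card y = t \<and> S \<subseteq> A \<union> F \<and> S \<inter> F \<subseteq> y})"
    using assms(1) by (simp add: Collect_conj_eq Int_assoc)
  finally show ?thesis
    using assms by (cases "S \<subseteq> A \<union> F") (simp_all add: card_layer_supersets_falling)
qed

lemma symmetrization:
  assumes "A \<inter> F = {}" "A \<union> F \<subseteq> {..<n}" "poly_deg_le n d p"
  obtains h :: "real poly" where "degree h \<le> d"
    "\<And>t. t \<le> card F \<Longrightarrow>
       (\<Sum>y | y \<subseteq> F \<and> card y = t. p (A \<union> y)) = real (card F choose t) * poly h (real t)"
proof -
  define SS where "SS = {S. S \<subseteq> {..<n} \<and> card S \<le> d}"
  obtain c where c: "\<And>x. x \<in> cube n \<Longrightarrow> p x = (\<Sum>S\<in>SS. c S * (\<Prod>i\<in>S. if i \<in> x then 1 else 0))"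
    using assms(3) unfolding poly_deg_le_def SS_def by blast
  define k where "k S = card (S \<inter> F)" for S
  \<comment> \<open>the monomial of S averages to (t)_k / (card F)_k over layer t, where k = card (S \<inter> F)\<close>
  define coeff where "coeff S = (if S \<subseteq> A \<union> F then c S / poly (falling_poly (k S)) (real (card F)) else 0)" for S
  define h where "h = (\<Sum>S\<in>SS. smult (coeff S) (falling_poly (k S)))"
  have "finite F"
    using assms(2) finite_subset[of F "{..<n}"] by auto
  have "finite SS"
    by (simp add: SS_def)
  have finite_S: "finite S" if "S \<in> SS" for S
    using that by (auto simp: SS_def intro: finite_subset)
  have "degree h \<le> d"
    unfolding h_def
  proof (rule degree_sum_le[OF \<open>finite SS\<close>])
    fix S
    assume "S \<in> SS"
    have "card (S \<inter> F) \<le> card S"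
      using finite_S[OF \<open>S \<in> SS\<close>] by (rule card_mono) auto
    then have "k S \<le> d"
      using \<open>S \<in> SS\<close> by (simp add: k_def SS_def)
    then show "degree (smult (coeff S) (falling_poly (k S))) \<le> d"
      using degree_falling_poly[of "k S"] degree_smult_le[of "coeff S" "falling_poly (k S)"] by linarith
  qed
  moreover have "(\<Sum>y | y \<subseteq> F \<and> card y = t. p (A \<union> y)) = real (card F choose t) * poly h (real t)"
    if "t \<le> card F" for t
  proof -
    have "(\<Sum>y | y \<subseteq> F \<and> card y = t. p (A \<union> y))
        = (\<Sum>y | y \<subseteq> F \<and> card y = t. \<Sum>S\<in>SS. c S * (\<Prod>i\<in>S. if i \<in> A \<union> y then 1 else 0))"
      using assms(2) by (intro sum.cong refl c) (auto simp: cube_def)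
    also have "\<dots> = (\<Sum>S\<in>SS. c S * (\<Sum>y | y \<subseteq> F \<and> card y = t. \<Prod>i\<in>S. if i \<in> A \<union> y then 1 else 0))"
      by (subst sum.swap) (simp add: sum_distrib_left)
    also have "\<dots> = (\<Sum>S\<in>SS. real (card F choose t) * (coeff S * poly (falling_poly (k S)) (real t)))"
      using layer_sum_monomial[OF \<open>finite F\<close> assms(1) finite_S that]
      by (intro sum.cong) (auto simp: coeff_def k_def)
    also have "\<dots> = real (card F choose t) * poly h (real t)"
      by (simp add: h_def poly_sum sum_distrib_left)
    finally show ?thesis .
  qed
  ultimately show ?thesis
    using that by blast
qed

lemma layer_average_small:
  assumes "finite F" "t \<le> card F"
    and sum: "(\<Sum>y | y \<subseteq> F \<and> card y = t. g y) = real (card F choose t) * v"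
    and small: "\<And>y. y \<subseteq> F \<Longrightarrow> card y = t \<Longrightarrow> \<bar>g y\<bar> \<le> 1 / 3"
  shows "\<bar>v\<bar> \<le> 1 / 3"
proof -
  have "real (card F choose t) * \<bar>v\<bar> = \<bar>\<Sum>y | y \<subseteq> F \<and> card y = t. g y\<bar>"
    using sum by (simp add: abs_mult)
  also have "\<dots> \<le> (\<Sum>y | y \<subseteq> F \<and> card y = t. \<bar>g y\<bar>)"
    by (rule sum_abs)
  also have "\<dots> \<le> (\<Sum>y | y \<subseteq> F \<and> card y = t. 1 / 3)"
    using small by (intro sum_mono) auto
  also have "\<dots> = real (card F choose t) * (1 / 3)"
    using assms(1) by (simp add: n_subsets)
  finally show ?thesis
    using assms(2) by (simp add: mult_le_cancel_left_pos)
qed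

lemma approx_poly_jump_top:
  assumes "T \<subseteq> S" "S \<subseteq> {..<n}" "poly_deg_le n d p"
    and small: "\<And>z. T \<subseteq> z \<Longrightarrow> z \<subset> S \<Longrightarrow> \<bar>p z\<bar> \<le> 1 / 3" and big: "1 \<le> \<bar>p S\<bar>"
  shows "card (S - T) \<le> 200 * (Suc d)\<^sup>2"
proof -
  define F where "F = S - T"
  have "finite F"
    using assms(2) by (auto simp: F_def intro: finite_subset)
  have TF: "T \<inter> F = {}" "T \<union> F \<subseteq> {..<n}" "T \<union> F = S"
    using assms(1,2) by (auto simp: F_def)
  obtain h where h: "degree h \<le> d" "\<And>t. t \<le> card F \<Longrightarrow>
      (\<Sum>y | y \<subseteq> F \<and> card y = t. p (T \<union> y)) = real (card F choose t) * poly h (real t)"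
    using symmetrization[OF TF(1,2) assms(3)] by blast
  have "card F \<le> 200 * (Suc d)\<^sup>2"
  proof (rule poly_jump_length_bound[OF h(1)])
    show "\<bar>poly h (real t)\<bar> \<le> 1 / 3" if "t < card F" for t
    proof (rule layer_average_small[OF \<open>finite F\<close> _ h(2)])
      show "\<bar>p (T \<union> y)\<bar> \<le> 1 / 3" if "y \<subseteq> F" "card y = t" for y
      proof (rule small)
        have "y \<noteq> F"
          using \<open>t < card F\<close> that by auto
        then show "T \<union> y \<subset> S"
          using \<open>y \<subseteq> F\<close> TF by auto
      qed simp
    qed (use that in auto)
    have "{y. y \<subseteq> F \<and> card y = card F} = {F}"
      using \<open>finite F\<close> by (auto dest: card_subset_eq)
    then show "1 \<le> \<bar>poly h (real (card F))\<bar>"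
      using h(2)[of "card F"] big TF(3) by simp
  qed
  then show ?thesis
    by (simp add: F_def)
qed

lemma approx_poly_jump_bot:
  assumes "T \<subseteq> S" "S \<subseteq> {..<n}" "poly_deg_le n d p"
    and small: "\<And>z. T \<subset> z \<Longrightarrow> z \<subseteq> S \<Longrightarrow> \<bar>p z\<bar> \<le> 1 / 3" and big: "1 \<le> \<bar>p T\<bar>"
  shows "card (S - T) \<le> 200 * (Suc d)\<^sup>2"
proof -
  define F where "F = S - T"
  have "finite F"
    using assms(2) by (auto simp: F_def intro: finite_subset)
  have TF: "T \<inter> F = {}" "T \<union> F \<subseteq> {..<n}"
    using assms(1,2) by (auto simp: F_def)
  obtain h where h: "degree h \<le> d" "\<And>t. t \<le> card F \<Longrightarrow>
      (\<Sum>y | y \<subseteq> F \<and> card y = t. p (T \<union> y)) = real (card F choose t) * poly h (real t)"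
    using symmetrization[OF TF assms(3)] by blast
  define h' where "h' = h \<circ>\<^sub>p [:real (card F), -1:]"
  have poly_h': "poly h' u = poly h (real (card F) - u)" for u
    by (simp add: h'_def poly_pcompose)
  have "degree h' \<le> d"
    using h(1) by (simp add: h'_def degree_pcompose)
  have "card F \<le> 200 * (Suc d)\<^sup>2"
  proof (rule poly_jump_length_bound[OF \<open>degree h' \<le> d\<close>])
    show "\<bar>poly h' (real u)\<bar> \<le> 1 / 3" if "u < card F" for u
    proof -
      have "\<bar>poly h (real (card F - u))\<bar> \<le> 1 / 3"
      proof (rule layer_average_small[OF \<open>finite F\<close> _ h(2)])
        show "\<bar>p (T \<union> y)\<bar> \<le> 1 / 3" if "y \<subseteq> F" "card y = card F - u" for y
        proof (rule small)
          have "y \<noteq> {}"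
            using \<open>u < card F\<close> that by auto
          then show "T \<subset> T \<union> y"
            using \<open>y \<subseteq> F\<close> TF by auto
        qed (use \<open>y \<subseteq> F\<close> in \<open>auto simp: F_def assms(1)\<close>)
      qed auto
      then show ?thesis
        using that by (simp add: poly_h' of_nat_diff)
    qed
    have "{y. y \<subseteq> F \<and> card y = 0} = {{}}"
      using \<open>finite F\<close> by (auto dest: finite_subset)
    then show "1 \<le> \<bar>poly h' (real (card F))\<bar>"
      using h(2)[of 0] big by (simp add: poly_h')
  qed
  then show ?thesis
    by (simp add: F_def)
qed

section \<open>Approximate degree and jumps\<close>

lemma poly_deg_le_full: "poly_deg_le n n G"
proof -
  define c where "c T = (\<Sum>U\<in>Pow T. (-1) ^ card U * G U) * (-1) ^ card T" for T :: "nat set"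
  have G: "G x = (\<Sum>T\<in>Pow x. c T)" if "finite x" for x
    using inclusion_exclusion_symmetric[of "\<lambda>T. (\<Sum>U\<in>Pow T. (-1) ^ card U * G U)" G x] that
    by (simp add: c_def mult.commute)
  have "G x = (\<Sum>S\<in>{S. S \<subseteq> {..<n} \<and> card S \<le> n}. c S * (\<Prod>i\<in>S. if i \<in> x then 1 else 0))"
    if "x \<in> cube n" for x
  proof -
    have x: "x \<subseteq> {..<n}"
      using that by (simp add: cube_def)
    have "{S. S \<subseteq> {..<n} \<and> card S \<le> n} = Pow {..<n}"
      using card_mono[of "{..<n}"] by auto
    then have "(\<Sum>S\<in>{S. S \<subseteq> {..<n} \<and> card S \<le> n}. c S * (\<Prod>i\<in>S. if i \<in> x then 1 else 0))
        = (\<Sum>S\<in>Pow {..<n}. if S \<subseteq> x then c S else 0)"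
      by (auto intro!: sum.cong simp: prod_indicator_eq finite_subset)
    also have "\<dots> = (\<Sum>S\<in>{S\<in>Pow {..<n}. S \<subseteq> x}. c S)"
      by (rule sum.inter_filter[symmetric]) simp
    also have "{S\<in>Pow {..<n}. S \<subseteq> x} = Pow x"
      using x by auto
    finally show ?thesis
      using G[of x] x finite_subset by auto
  qed
  then show ?thesis
    unfolding poly_deg_le_def by blast
qed

lemma Ndeg_approximation:
  obtains p where "poly_deg_le n (Ndeg n g) p"
    "\<And>x. x \<in> cube n \<Longrightarrow> \<not> g x \<Longrightarrow> \<bar>p x\<bar> \<le> 1 / 3"
    "\<And>x. x \<in> cube n \<Longrightarrow> g x \<Longrightarrow> 1 \<le> \<bar>p x\<bar>"
proof -
  have "\<exists>p. poly_deg_le n n p \<and> (\<forall>x\<in>cube n. (\<not> g x \<longrightarrow> \<bar>p x\<bar> \<le> 1/3) \<and> (g x \<longrightarrow> \<bar>p x\<bar> \<ge> 1))"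
    by (rule exI[of _ "\<lambda>x. if g x then 1 else 0"]) (simp add: poly_deg_le_full)
  then have "\<exists>p. poly_deg_le n (Ndeg n g) p \<and>
      (\<forall>x\<in>cube n. (\<not> g x \<longrightarrow> \<bar>p x\<bar> \<le> 1/3) \<and> (g x \<longrightarrow> \<bar>p x\<bar> \<ge> 1))"
    unfolding Ndeg_def by (rule LeastI)
  then show ?thesis
    using that by blast
qed

lemma Ndeg_pos:
  assumes "x \<in> cube n" "y \<in> cube n" "g x" "\<not> g y"
  shows "1 \<le> Ndeg n g"
proof (rule ccontr)
  assume "\<not> 1 \<le> Ndeg n g"
  then have "Ndeg n g = 0"
    by simp
  obtain p where p: "poly_deg_le n (Ndeg n g) p"
    "\<And>x. x \<in> cube n \<Longrightarrow> \<not> g x \<Longrightarrow> \<bar>p x\<bar> \<le> 1 / 3" "\<And>x. x \<in> cube n \<Longrightarrow> g x \<Longrightarrow> 1 \<le> \<bar>p x\<bar>"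
    using Ndeg_approximation by blast
  have "{S. S \<subseteq> {..<n} \<and> card S \<le> 0} = {{}}"
    by (auto dest: finite_subset)
  then have "p x = p y"
    using p(1) assms(1,2) \<open>Ndeg n g = 0\<close> by (auto simp: poly_deg_le_def)
  then show False
    using p(2)[of y] p(3)[of x] assms by simp
qed

lemma Ndeg_jump_top:
  assumes "T \<subseteq> S" "S \<subseteq> {..<n}" "\<And>z. T \<subseteq> z \<Longrightarrow> z \<subset> S \<Longrightarrow> \<not> g z" "g S"
  shows "card (S - T) \<le> 200 * (Suc (Ndeg n g))\<^sup>2"
proof -
  obtain p where p: "poly_deg_le n (Ndeg n g) p"
    "\<And>x. x \<in> cube n \<Longrightarrow> \<not> g x \<Longrightarrow> \<bar>p x\<bar> \<le> 1 / 3" "\<And>x. x \<in> cube n \<Longrightarrow> g x \<Longrightarrow> 1 \<le> \<bar>p x\<bar>"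
    using Ndeg_approximation by blast
  show ?thesis
    using assms by (intro approx_poly_jump_top[OF assms(1,2) p(1)] p(2,3)) (auto simp: cube_def)
qed

lemma Ndeg_jump_bot:
  assumes "T \<subseteq> S" "S \<subseteq> {..<n}" "\<And>z. T \<subset> z \<Longrightarrow> z \<subseteq> S \<Longrightarrow> \<not> g z" "g T"
  shows "card (S - T) \<le> 200 * (Suc (Ndeg n g))\<^sup>2"
proof -
  obtain p where p: "poly_deg_le n (Ndeg n g) p"
    "\<And>x. x \<in> cube n \<Longrightarrow> \<not> g x \<Longrightarrow> \<bar>p x\<bar> \<le> 1 / 3" "\<And>x. x \<in> cube n \<Longrightarrow> g x \<Longrightarrow> 1 \<le> \<bar>p x\<bar>"
    using Ndeg_approximation by blast
  show ?thesis
    using assms by (intro approx_poly_jump_bot[OF assms(1,2) p(1)] p(2,3)) (auto simp: cube_def)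
qed

section \<open>Monotone potentials with bounded jumps\<close>

locale bounded_jump_potential =
  fixes U :: "'a set" and \<phi> :: "'a set \<Rightarrow> nat" and B :: nat
  assumes finite_U: "finite U"
    and mono: "\<And>x y. x \<subseteq> y \<Longrightarrow> y \<subseteq> U \<Longrightarrow> \<phi> x \<le> \<phi> y"
    and unit_step: "\<And>x i. x \<subseteq> U \<Longrightarrow> i \<in> x \<Longrightarrow> \<phi> x \<le> Suc (\<phi> (x - {i}))"
    and jump_top: "\<And>T S. T \<subseteq> S \<Longrightarrow> S \<subseteq> U \<Longrightarrow> \<phi> S = Suc (\<phi> T) \<Longrightarrow>
      (\<And>z. T \<subseteq> z \<Longrightarrow> z \<subset> S \<Longrightarrow> \<phi> z = \<phi> T) \<Longrightarrow> card (S - T) \<le> B"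
    and jump_bot: "\<And>T S. T \<subseteq> S \<Longrightarrow> S \<subseteq> U \<Longrightarrow> \<phi> S = Suc (\<phi> T) \<Longrightarrow>
      (\<And>z. T \<subset> z \<Longrightarrow> z \<subseteq> S \<Longrightarrow> \<phi> z = \<phi> S) \<Longrightarrow> card (S - T) \<le> B"
begin

lemma exists_minimal_subset:
  assumes "x \<subseteq> U"
  obtains S where "S \<subseteq> x" "\<phi> S = \<phi> x" "\<And>T. T \<subset> S \<Longrightarrow> \<phi> T < \<phi> S"
proof -
  define C where "C = {S. S \<subseteq> x \<and> \<phi> x \<le> \<phi> S}"
  have "x \<in> C"
    by (simp add: C_def)
  then obtain S where "S \<in> C" and least: "\<And>T. T \<in> C \<Longrightarrow> card S \<le> card T"
    using ex_has_least_nat[of "\<lambda>S. S \<in> C" x card] by metis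
  then have S: "S \<subseteq> x" "\<phi> x \<le> \<phi> S"
    by (simp_all add: C_def)
  have "finite S"
    using S(1) assms finite_U by (meson finite_subset)
  have "\<phi> S = \<phi> x"
    using S assms mono by (simp add: le_antisym)
  moreover have "\<phi> T < \<phi> S" if "T \<subset> S" for T
  proof (rule ccontr)
    assume "\<not> \<phi> T < \<phi> S"
    then have "card S \<le> card T"
      using that S \<open>\<phi> S = \<phi> x\<close> by (intro least) (auto simp: C_def)
    moreover have "card T < card S"
      using \<open>finite S\<close> that by (rule psubset_card_mono)
    ultimately show False
      by simp
  qed
  ultimately show ?thesis
    using that S(1) by blast
qed

lemma minimal_set_step:
  assumes "S \<subseteq> U" "\<And>T. T \<subset> S \<Longrightarrow> \<phi> T < \<phi> S" "i \<in> S"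
  obtains T where "T \<subseteq> S" "\<phi> S = Suc (\<phi> T)" "\<And>T'. T' \<subset> T \<Longrightarrow> \<phi> T' < \<phi> T"
    "card (S - T) \<le> B"
proof -
  have "\<phi> (S - {i}) < \<phi> S"
    using assms(3) by (intro assms(2)) auto
  moreover have "\<phi> S \<le> Suc (\<phi> (S - {i}))"
    using assms(1,3) by (rule unit_step)
  moreover obtain T where T: "T \<subseteq> S - {i}" "\<phi> T = \<phi> (S - {i})" "\<And>T'. T' \<subset> T \<Longrightarrow> \<phi> T' < \<phi> T"
    using exists_minimal_subset[of "S - {i}"] assms(1) by blast
  ultimately have Suc: "\<phi> S = Suc (\<phi> T)"
    by simp
  have "card (S - T) \<le> B"
  proof (rule jump_top)
    show "T \<subseteq> S" "S \<subseteq> U" "\<phi> S = Suc (\<phi> T)"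
      using T(1) assms(1) Suc by auto
    show "\<phi> z = \<phi> T" if "T \<subseteq> z" "z \<subset> S" for z
    proof -
      have "\<phi> z < \<phi> S"
        using that(2) by (rule assms(2))
      moreover have "\<phi> T \<le> \<phi> z"
        using that assms(1) by (intro mono) auto
      ultimately show ?thesis
        using Suc by simp
    qed
  qed
  then show ?thesis
    using that T Suc by blast
qed

lemma card_le_potential_if_minimal:
  assumes "S \<subseteq> U" "\<And>T. T \<subset> S \<Longrightarrow> \<phi> T < \<phi> S"
  shows "card S \<le> \<phi> S * B"
  using assms
proof (induction "\<phi> S" arbitrary: S rule: less_induct)
  case less
  show ?case
  proof (cases "S = {}")
    case False
    then obtain i where "i \<in> S"
      by auto
    then obtain T where T: "T \<subseteq> S" "\<phi> S = Suc (\<phi> T)" "\<And>T'. T' \<subset> T \<Longrightarrow> \<phi> T' < \<phi> T"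
      and "card (S - T) \<le> B"
      using minimal_set_step less.prems by metis
    moreover have "card T \<le> \<phi> T * B"
      using T less.prems(1) by (intro less.hyps) auto
    moreover have "card S = card T + card (S - T)"
      using T(1) less.prems(1) finite_subset[OF _ finite_U]
      by (simp add: card_Diff_subset card_mono)
    ultimately show ?thesis
      by simp
  qed simp
qed

lemma exists_small_lower_set:
  assumes "x \<subseteq> U"
  obtains S where "S \<subseteq> x" "\<phi> S = \<phi> x" "card S \<le> \<phi> x * B"
proof -
  obtain S where "S \<subseteq> x" "\<phi> S = \<phi> x" "\<And>T. T \<subset> S \<Longrightarrow> \<phi> T < \<phi> S"
    using exists_minimal_subset[OF assms] by blast
  then show ?thesis
    using that card_le_potential_if_minimal[of S] assms by auto
qed

lemma le_potential_top: "x \<subseteq> U \<Longrightarrow> \<phi> x \<le> \<phi> U"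
  by (rule mono) simp_all

lemma complement_jump_top:
  assumes "T \<subseteq> S" "S \<subseteq> U" "\<phi> U - \<phi> (U - S) = Suc (\<phi> U - \<phi> (U - T))"
    and const: "\<And>z. T \<subseteq> z \<Longrightarrow> z \<subset> S \<Longrightarrow> \<phi> U - \<phi> (U - z) = \<phi> U - \<phi> (U - T)"
  shows "card (S - T) \<le> B"
proof -
  have "card ((U - T) - (U - S)) \<le> B"
  proof (rule jump_bot)
    show "U - S \<subseteq> U - T" "U - T \<subseteq> U" "\<phi> (U - T) = Suc (\<phi> (U - S))"
      using assms(1,3) le_potential_top[of "U - S"] le_potential_top[of "U - T"] by auto
    show "\<phi> z = \<phi> (U - T)" if "U - S \<subset> z" "z \<subseteq> U - T" for z
    proof -
      have "U - (U - z) = z"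
        using that by auto
      moreover have "U - z \<noteq> S"
        using that(1) \<open>U - (U - z) = z\<close> by blast
      then have "T \<subseteq> U - z" "U - z \<subset> S"
        using that assms(1,2) by blast+
      ultimately have "\<phi> U - \<phi> z = \<phi> U - \<phi> (U - T)"
        using const[of "U - z"] by simp
      moreover have "z \<subseteq> U"
        using that(2) by auto
      ultimately show ?thesis
        using le_potential_top[of z] le_potential_top[of "U - T"] by simp
    qed
  qed
  moreover have "(U - T) - (U - S) = S - T"
    using assms(2) by auto
  ultimately show ?thesis
    by simp
qed

lemma complement_jump_bot:
  assumes "T \<subseteq> S" "S \<subseteq> U" "\<phi> U - \<phi> (U - S) = Suc (\<phi> U - \<phi> (U - T))"
    and const: "\<And>z. T \<subset> z \<Longrightarrow> z \<subseteq> S \<Longrightarrow> \<phi> U - \<phi> (U - z) = \<phi> U - \<phi> (U - S)"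
  shows "card (S - T) \<le> B"
proof -
  have "card ((U - T) - (U - S)) \<le> B"
  proof (rule jump_top)
    show "U - S \<subseteq> U - T" "U - T \<subseteq> U" "\<phi> (U - T) = Suc (\<phi> (U - S))"
      using assms(1,3) le_potential_top[of "U - S"] le_potential_top[of "U - T"] by auto
    show "\<phi> z = \<phi> (U - S)" if "U - S \<subseteq> z" "z \<subset> U - T" for z
    proof -
      have "U - (U - z) = z"
        using that by auto
      moreover have "T \<noteq> U - z"
        using that(2) \<open>U - (U - z) = z\<close> by blast
      then have "T \<subset> U - z" "U - z \<subseteq> S"
        using that assms(1,2) by blast+
      ultimately have "\<phi> U - \<phi> z = \<phi> U - \<phi> (U - S)"
        using const[of "U - z"] by simp
      moreover have "z \<subseteq> U"
        using that(2) by auto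
      ultimately show ?thesis
        using le_potential_top[of z] le_potential_top[of "U - S"] by simp
    qed
  qed
  moreover have "(U - T) - (U - S) = S - T"
    using assms(2) by auto
  ultimately show ?thesis
    by simp
qed

(* The duality x \<mapsto> U - x exchanges the two kinds of jumps. *)
lemma complement: "bounded_jump_potential U (\<lambda>x. \<phi> U - \<phi> (U - x)) B"
proof
  show "\<phi> U - \<phi> (U - x) \<le> \<phi> U - \<phi> (U - y)" if "x \<subseteq> y" "y \<subseteq> U" for x y
    using that by (intro diff_le_mono2 mono) auto
  show "\<phi> U - \<phi> (U - x) \<le> Suc (\<phi> U - \<phi> (U - (x - {i})))" if "x \<subseteq> U" "i \<in> x" for x i
  proof -
    have "U - (x - {i}) = insert i (U - x)"
      using that by auto
    moreover have "\<phi> (insert i (U - x)) \<le> Suc (\<phi> (U - x))"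
      using unit_step[of "insert i (U - x)" i] that by auto
    moreover have "\<phi> (insert i (U - x)) \<le> \<phi> U"
      using that by (intro le_potential_top) auto
    ultimately show ?thesis
      by simp
  qed
qed (use finite_U complement_jump_top complement_jump_bot in blast)+

lemma exists_small_certificate:
  assumes "x \<subseteq> U"
  obtains S W where "S \<subseteq> x" "x \<subseteq> W" "W \<subseteq> U" "\<phi> S = \<phi> x" "\<phi> W = \<phi> x"
    "card S + card (U - W) \<le> \<phi> U * B"
proof -
  obtain S where S: "S \<subseteq> x" "\<phi> S = \<phi> x" "card S \<le> \<phi> x * B"
    using exists_small_lower_set[OF assms] by blast
  have co_x: "U - (U - x) = x"
    using assms by auto
  obtain S' where S': "S' \<subseteq> U - x" "\<phi> U - \<phi> (U - S') = \<phi> U - \<phi> x" "card S' \<le> (\<phi> U - \<phi> x) * B"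
    using bounded_jump_potential.exists_small_lower_set[OF complement, of "U - x"] co_x by auto
  define W where "W = U - S'"
  have "U - W = S'"
    using S'(1) by (auto simp: W_def)
  have "\<phi> W \<le> \<phi> U" "\<phi> x \<le> \<phi> U"
    using assms by (auto simp: W_def intro: mono)
  then have "\<phi> W = \<phi> x"
    using S'(2) by (simp add: W_def)
  moreover have "card S + card (U - W) \<le> \<phi> U * B"
  proof -
    have "\<phi> x * B + (\<phi> U - \<phi> x) * B = \<phi> U * B"
      using \<open>\<phi> x \<le> \<phi> U\<close> by (simp flip: add_mult_distrib)
    moreover have "card (U - W) \<le> (\<phi> U - \<phi> x) * B"
      using S'(3) \<open>U - W = S'\<close> by simp
    ultimately show ?thesis
      using S(3) by linarith
  qed
  moreover have "x \<subseteq> W" "W \<subseteq> U"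
    using S'(1) assms by (auto simp: W_def)
  ultimately show ?thesis
    using that S(1,2) by blast
qed

end

section \<open>The level function of a zebra function\<close>

fun walk :: "'a set \<Rightarrow> 'a list \<Rightarrow> 'a set list" where
  "walk A [] = [A]"
| "walk A (e # es) = A # walk (insert e A) es"

fun flips :: "('a set \<Rightarrow> bool) \<Rightarrow> 'a set \<Rightarrow> 'a list \<Rightarrow> nat" where
  "flips f A [] = 0"
| "flips f A (e # es) = (if f A = f (insert e A) then 0 else 1) + flips f (insert e A) es"

lemma length_walk: "length (walk A es) = Suc (length es)"
  by (induction es arbitrary: A) auto

lemma nth_walk: "i \<le> length es \<Longrightarrow> walk A es ! i = A \<union> set (take i es)"
proof (induction es arbitrary: A i)
  case (Cons e es)
  then show ?case
    by (cases i) auto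
qed simp

lemma walk_eq_Cons: "\<exists>rest. walk A es = A # rest"
  by (cases es) auto

lemma last_walk: "last (walk A es) = A \<union> set es"
proof (induction es arbitrary: A)
  case (Cons e es)
  then show ?case
    using walk_eq_Cons[of "insert e A" es] by auto
qed simp

lemma alt_num_eq_sum: "alt_num f xs = (\<Sum>i < length xs - 1. of_bool (f (xs ! i) \<noteq> f (xs ! Suc i)))"
proof -
  have "{i. Suc i < length xs \<and> f (xs ! i) \<noteq> f (xs ! Suc i)}
      = {..<length xs - 1} \<inter> {i. f (xs ! i) \<noteq> f (xs ! Suc i)}"
    by auto
  then show ?thesis
    unfolding alt_num_def by (subst sum_of_bool_eq) simp_all
qed

lemma alt_num_Cons_Cons:
  "alt_num f (x # y # xs) = (if f x = f y then 0 else 1) + alt_num f (y # xs)"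
  unfolding alt_num_eq_sum by (simp add: sum.lessThan_Suc_shift del: sum_of_bool_eq sum.lessThan_Suc)

lemma alt_num_walk: "alt_num f (walk A es) = flips f A es"
proof (induction es arbitrary: A)
  case Nil
  then show ?case
    by (simp add: alt_num_def)
next
  case (Cons e es)
  obtain rest where "walk (insert e A) es = insert e A # rest"
    using walk_eq_Cons by blast
  then show ?case
    using Cons[of "insert e A"] by (simp add: alt_num_Cons_Cons)
qed

lemma mono_path_walk:
  assumes "distinct es" "set es = {..<n}"
  shows "mono_path n (walk {} es)"
  unfolding mono_path_def
proof (intro conjI allI impI)
  show "walk {} es \<noteq> []" "hd (walk {} es) = {}"
    using walk_eq_Cons[of "{}" es] by auto
  show "last (walk {} es) = {..<n}"
    using assms by (simp add: last_walk)
  fix i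
  assume "Suc i < length (walk {} es)"
  then have i: "i < length es"
    by (simp add: length_walk)
  have "distinct (take (Suc i) es)"
    using assms(1) by (rule distinct_take)
  then have "es ! i \<notin> set (take i es)"
    using i by (simp add: take_Suc_conv_app_nth)
  moreover have "es ! i < n"
    using assms(2) i nth_mem by blast
  moreover have "set (take (Suc i) es) = insert (es ! i) (set (take i es))"
    using i by (simp add: take_Suc_conv_app_nth)
  moreover have "walk {} es ! i = set (take i es)" "walk {} es ! Suc i = set (take (Suc i) es)"
    using i by (simp_all add: nth_walk)
  ultimately show "\<exists>a. a < n \<and> a \<notin> walk {} es ! i \<and> walk {} es ! Suc i = insert a (walk {} es ! i)"
    by metis
qed

lemma flips_append: "flips f A (es @ fs) = flips f A es + flips f (A \<union> set es) fs"
  by (induction es arbitrary: A) auto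

lemma flips_parity: "f (A \<union> set es) = f A \<longleftrightarrow> even (flips f A es)"
proof (induction es arbitrary: A)
  case (Cons e es)
  then show ?case
    using Cons[of "insert e A"] by auto
qed simp

(* For a zebra function the count does not depend on the enumeration of x
   (flips_eq_level); the sorted one is just a canonical choice. *)
definition level :: "(nat set \<Rightarrow> bool) \<Rightarrow> nat set \<Rightarrow> nat" where
  "level f x = flips f {} (sorted_list_of_set x)"

lemma flips_eq_level:
  assumes "zebra n f" "distinct es" "set es \<subseteq> {..<n}"
  shows "flips f {} es = level f (set es)"
proof -
  define rest where "rest = sorted_list_of_set ({..<n} - set es)"
  have "mono_path n (walk {} (es @ rest))" "mono_path n (walk {} (sorted_list_of_set (set es) @ rest))"
    using assms(2,3) by (auto intro!: mono_path_walk simp: rest_def)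
  then have "alt_num f (walk {} (es @ rest)) = alt_num f (walk {} (sorted_list_of_set (set es) @ rest))"
    using assms(1) unfolding zebra_def by blast
  then show ?thesis
    by (simp add: alt_num_walk flips_append level_def)
qed

lemma level_mono:
  assumes "zebra n f" "y \<subseteq> x" "x \<subseteq> {..<n}"
  shows "level f y \<le> level f x"
proof -
  have "finite x" "finite y"
    using assms(2,3) by (auto intro: finite_subset)
  define es where "es = sorted_list_of_set y @ sorted_list_of_set (x - y)"
  have "distinct es" "set es = x"
    using \<open>finite x\<close> \<open>finite y\<close> assms(2) by (auto simp: es_def)
  then have "level f x = flips f {} es"
    using flips_eq_level[OF assms(1)] assms(3) by metis
  also have "\<dots> = level f y + flips f y (sorted_list_of_set (x - y))"
    using \<open>finite y\<close> by (simp add: es_def flips_append level_def)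
  finally show ?thesis
    by simp
qed

lemma level_unit_step:
  assumes "zebra n f" "x \<subseteq> {..<n}" "i \<in> x"
  shows "level f x \<le> Suc (level f (x - {i}))"
proof -
  have "finite x"
    using assms(2) finite_subset by auto
  define es where "es = sorted_list_of_set (x - {i}) @ [i]"
  have "distinct es" "set es = x"
    using \<open>finite x\<close> assms(3) by (auto simp: es_def)
  then have "level f x = flips f {} es"
    using flips_eq_level[OF assms(1)] assms(2) by metis
  also have "\<dots> = level f (x - {i}) + flips f (x - {i}) [i]"
    using \<open>finite x\<close> by (simp add: es_def flips_append level_def)
  finally show ?thesis
    by simp
qed

lemma level_parity: "finite x \<Longrightarrow> f x = f {} \<longleftrightarrow> even (level f x)"
  using flips_parity[of f "{}" "sorted_list_of_set x"] by (simp add: level_def)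

lemma alt_eq_level:
  assumes "zebra n f"
  shows "alt n f = level f {..<n}"
proof -
  have path: "mono_path n (walk {} (sorted_list_of_set {..<n}))"
    by (intro mono_path_walk) auto
  have level: "level f {..<n} = alt_num f (walk {} (sorted_list_of_set {..<n}))"
    by (simp add: alt_num_walk level_def)
  then have "alt_num f xs = level f {..<n}" if "mono_path n xs" for xs
    using assms path that unfolding zebra_def by metis
  then have "{alt_num f xs | xs. mono_path n xs} = {level f {..<n}}"
    using path level by blast
  then show ?thesis
    by (simp add: alt_def)
qed

definition block_bound :: "nat \<Rightarrow> (nat set \<Rightarrow> bool) \<Rightarrow> nat" where
  "block_bound n f = 200 * (Suc (max (Ndeg n f) (Ndeg n (\<lambda>x. \<not> f x))))\<^sup>2"

lemma Ndeg_flip_le_max: "Ndeg n (\<lambda>z. f z \<noteq> b) \<le> max (Ndeg n f) (Ndeg n (\<lambda>x. \<not> f x))"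
  by (cases b) simp_all

lemma jump_le_block_bound: "200 * (Suc (Ndeg n (\<lambda>z. f z \<noteq> b)))\<^sup>2 \<le> block_bound n f"
  unfolding block_bound_def using Ndeg_flip_le_max[of n f b] by (simp add: power_mono)

lemma eq_if_level_eq:
  "x \<subseteq> {..<n} \<Longrightarrow> y \<subseteq> {..<n} \<Longrightarrow> level f x = level f y \<Longrightarrow> f x = f y"
  using level_parity[of x f] level_parity[of y f] finite_subset[OF _ finite_lessThan] by metis

lemma neq_if_level_Suc:
  "x \<subseteq> {..<n} \<Longrightarrow> y \<subseteq> {..<n} \<Longrightarrow> level f y = Suc (level f x) \<Longrightarrow> f x \<noteq> f y"
  using level_parity[of x f] level_parity[of y f] finite_subset[OF _ finite_lessThan]
  by (cases "even (level f x)") auto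

lemma level_jump_top:
  assumes "T \<subseteq> S" "S \<subseteq> {..<n}" "level f S = Suc (level f T)"
    and const: "\<And>z. T \<subseteq> z \<Longrightarrow> z \<subset> S \<Longrightarrow> level f z = level f T"
  shows "card (S - T) \<le> block_bound n f"
proof -
  have "f z = f T" if "T \<subseteq> z" "z \<subset> S" for z
    using eq_if_level_eq[OF _ _ const[OF that]] that assms(1,2) by blast
  moreover have "f T \<noteq> f S"
    using neq_if_level_Suc[OF _ assms(2,3)] assms(1,2) by blast
  ultimately have "card (S - T) \<le> 200 * (Suc (Ndeg n (\<lambda>z. f z \<noteq> f T)))\<^sup>2"
    using Ndeg_jump_top[OF assms(1,2), of "\<lambda>z. f z \<noteq> f T"] by blast
  then show ?thesis
    using jump_le_block_bound by (rule order.trans)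
qed

lemma level_jump_bot:
  assumes "T \<subseteq> S" "S \<subseteq> {..<n}" "level f S = Suc (level f T)"
    and const: "\<And>z. T \<subset> z \<Longrightarrow> z \<subseteq> S \<Longrightarrow> level f z = level f S"
  shows "card (S - T) \<le> block_bound n f"
proof -
  have "f z = f S" if "T \<subset> z" "z \<subseteq> S" for z
    using eq_if_level_eq[OF _ _ const[OF that]] that assms(2) by blast
  moreover have "f T \<noteq> f S"
    using neq_if_level_Suc[OF _ assms(2,3)] assms(1,2) by blast
  ultimately have "card (S - T) \<le> 200 * (Suc (Ndeg n (\<lambda>z. f z \<noteq> f S)))\<^sup>2"
    using Ndeg_jump_bot[OF assms(1,2), of "\<lambda>z. f z \<noteq> f S"] by blast
  then show ?thesis
    using jump_le_block_bound by (rule order.trans)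
qed

lemma zebra_bounded_jump_potential:
  assumes "zebra n f"
  shows "bounded_jump_potential {..<n} (level f) (block_bound n f)"
proof
  show "level f x \<le> level f y" if "x \<subseteq> y" "y \<subseteq> {..<n}" for x y
    using assms that by (rule level_mono)
  show "level f x \<le> Suc (level f (x - {i}))" if "x \<subseteq> {..<n}" "i \<in> x" for x i
    using assms that by (rule level_unit_step)
  show "card (S - T) \<le> block_bound n f"
    if "T \<subseteq> S" "S \<subseteq> {..<n}" "level f S = Suc (level f T)"
      "\<And>z. T \<subseteq> z \<Longrightarrow> z \<subset> S \<Longrightarrow> level f z = level f T" for T S
    using that by (rule level_jump_top)
  show "card (S - T) \<le> block_bound n f"
    if "T \<subseteq> S" "S \<subseteq> {..<n}" "level f S = Suc (level f T)"
      "\<And>z. T \<subset> z \<Longrightarrow> z \<subseteq> S \<Longrightarrow> level f z = level f S" for T S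
    using that by (rule level_jump_bot)
qed simp

lemma cert_at_le_level:
  assumes "zebra n f" "x \<in> cube n"
  shows "cert_at n f x \<le> level f {..<n} * block_bound n f"
proof -
  interpret bounded_jump_potential "{..<n}" "level f" "block_bound n f"
    by (rule zebra_bounded_jump_potential[OF assms(1)])
  have x: "x \<subseteq> {..<n}"
    using assms(2) by (simp add: cube_def)
  obtain S W where SW: "S \<subseteq> x" "x \<subseteq> W" "W \<subseteq> {..<n}" "level f S = level f x" "level f W = level f x"
    and card: "card S + card ({..<n} - W) \<le> level f {..<n} * block_bound n f"
    using exists_small_certificate[OF x] by blast
  define C where "C = S \<union> ({..<n} - W)"
  have "\<forall>y\<in>cube n. (\<forall>i\<in>C. i \<in> y \<longleftrightarrow> i \<in> x) \<longrightarrow> f y = f x"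
  proof (intro ballI impI)
    fix y
    assume "y \<in> cube n" "\<forall>i\<in>C. i \<in> y \<longleftrightarrow> i \<in> x"
    then have y: "y \<subseteq> {..<n}" "S \<subseteq> y" "y \<subseteq> W"
      using SW(1,2) by (auto simp: C_def cube_def)
    then have "level f y = level f x"
      using level_mono[OF assms(1)] SW by (metis le_antisym)
    then show "f y = f x"
      using eq_if_level_eq x y(1) by blast
  qed
  moreover have "C \<subseteq> {..<n}"
    using SW(1) x by (auto simp: C_def)
  ultimately have "cert_at n f x \<le> card C"
    unfolding cert_at_def by (intro Least_le) blast
  also have "\<dots> \<le> card S + card ({..<n} - W)"
    unfolding C_def by (rule card_Un_le)
  finally show ?thesis
    using card by linarith
qed

lemma cert_le_alt_mult_block_bound:
  assumes "zebra n f"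
  shows "cert n f \<le> alt n f * block_bound n f"
  unfolding cert_def alt_eq_level[OF assms]
proof (rule Max.boundedI)
  show "finite (cert_at n f ` cube n)" "cert_at n f ` cube n \<noteq> {}"
    by (auto simp: cube_def)
qed (use cert_at_le_level[OF assms] in blast)

lemma block_bound_le:
  assumes "1 \<le> Ndeg n f"
  shows "real (block_bound n f) \<le> 800 * max ((real (Ndeg n f))\<^sup>2) ((real (Ndeg n (\<lambda>x. \<not> f x)))\<^sup>2)"
proof -
  define M where "M = max (Ndeg n f) (Ndeg n (\<lambda>x. \<not> f x))"
  have "(Suc M)\<^sup>2 \<le> (2 * M)\<^sup>2"
    using assms by (intro power_mono) (auto simp: M_def)
  then have "block_bound n f \<le> 800 * M\<^sup>2"
    by (simp add: block_bound_def M_def[symmetric] power_mult_distrib)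
  then have "real (block_bound n f) \<le> 800 * (real M)\<^sup>2"
    by (metis of_nat_le_iff of_nat_mult of_nat_numeral of_nat_power)
  moreover have "(real M)\<^sup>2 = max ((real (Ndeg n f))\<^sup>2) ((real (Ndeg n (\<lambda>x. \<not> f x)))\<^sup>2)"
    unfolding M_def by (cases "Ndeg n f \<le> Ndeg n (\<lambda>x. \<not> f x)") (auto simp: max_def power_mono)
  ultimately show ?thesis
    by simp
qed

theorem theorem3p10:
  shows "\<exists>c::real. c > 0 \<and> (\<forall>(n::nat) (f::nat set \<Rightarrow> bool) (k::nat).
     zebra n f \<and> (\<exists>x\<in>cube n. \<exists>y\<in>cube n. f x \<noteq> f y) \<and> k \<ge> 1 \<and> alt n f = k \<longrightarrow>
     real (cert n f) \<le> c * real (alt n f) *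
        max ((real (Ndeg n f))\<^sup>2) ((real (Ndeg n (\<lambda>x. \<not> f x)))\<^sup>2))"
proof (intro exI[of _ 800] conjI allI impI)
  fix n f k
  assume H: "zebra n f \<and> (\<exists>x\<in>cube n. \<exists>y\<in>cube n. f x \<noteq> f y) \<and> k \<ge> 1 \<and> alt n f = k"
  then obtain x y where "x \<in> cube n" "y \<in> cube n" "f x \<noteq> f y"
    by blast
  then have "1 \<le> Ndeg n f"
    using Ndeg_pos[of x n y f] Ndeg_pos[of y n x f] by (cases "f x") auto
  have "cert n f \<le> alt n f * block_bound n f"
    using H by (blast intro: cert_le_alt_mult_block_bound)
  then have "real (cert n f) \<le> real (alt n f) * real (block_bound n f)"
    by (metis of_nat_le_iff of_nat_mult)
  also have "\<dots> \<le> real (alt n f) * (800 * max ((real (Ndeg n f))\<^sup>2) ((real (Ndeg n (\<lambda>x. \<not> f x)))\<^sup>2))"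
    using block_bound_le[OF \<open>1 \<le> Ndeg n f\<close>] by (intro mult_left_mono) auto
  finally show "real (cert n f) \<le> 800 * real (alt n f) *
      max ((real (Ndeg n f))\<^sup>2) ((real (Ndeg n (\<lambda>x. \<not> f x)))\<^sup>2)"
    by (simp add: mult_ac)
qed simp

end
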